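(* A tree $T$ that has a vertex $v$ with $\deg(v)\geq 4$, or two distinct vertices $u,v$ with $\deg(u)\geq 3$ and $\deg(v)\geq 3$, is not in $\mathcal{G}^{\rm SSP}$.
   Context: All graphs are finite, simple, undirected. For a graph $G$ on $\{1,\ldots,n\}$, $\mathcal{S}(G)$ is the set of real symmetric $n\times n$ matrices $A=(a_{ij})$ with $a_{ij}\neq0$ iff $\{i,j\}\in E(G)$ for $i\neq j$ (diagonal arbitrary). A real symmetric $A$ has the strong spectral property (SSP) if the only real symmetric $X$ with $A\circ X=0$, $I\circ X=0$, $AX-XA=0$ is $X=0$ ($\circ$ = entrywise product). $\mathcal{G}^{\rm SSP}$ is the set of graphs $G$ such that every matrix in $\mathcal{S}(G)$ has the SSP. *)

theory Defs
  imports "HOL-Analysis.Analysis"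
begin

definition simple_graph :: "('n::finite \<Rightarrow> 'n \<Rightarrow> bool) \<Rightarrow> bool" where
  "simple_graph E \<longleftrightarrow> (\<forall>u v. E u v \<longleftrightarrow> E v u) \<and> (\<forall>v. \<not> E v v)"

definition graph_connected :: "('n::finite \<Rightarrow> 'n \<Rightarrow> bool) \<Rightarrow> bool" where
  "graph_connected E \<longleftrightarrow> (\<forall>u v. E\<^sup>*\<^sup>* u v)"

definition is_cycle :: "('n::finite \<Rightarrow> 'n \<Rightarrow> bool) \<Rightarrow> 'n list \<Rightarrow> bool" where
  "is_cycle E vs \<longleftrightarrow> length vs \<ge> 3 \<and> distinct vs
     \<and> (\<forall>i. Suc i < length vs \<longrightarrow> E (vs ! i) (vs ! Suc i))
     \<and> E (last vs) (hd vs)"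

definition acyclic_graph :: "('n::finite \<Rightarrow> 'n \<Rightarrow> bool) \<Rightarrow> bool" where
  "acyclic_graph E \<longleftrightarrow> (\<nexists>vs. is_cycle E vs)"

definition is_tree :: "('n::finite \<Rightarrow> 'n \<Rightarrow> bool) \<Rightarrow> bool" where
  "is_tree E \<longleftrightarrow> simple_graph E \<and> graph_connected E \<and> acyclic_graph E"

definition degree :: "('n::finite \<Rightarrow> 'n \<Rightarrow> bool) \<Rightarrow> 'n \<Rightarrow> nat" where
  "degree E v = card {u. E v u}"

definition symmetric_mat :: "real^'n^'n \<Rightarrow> bool" where
  "symmetric_mat A \<longleftrightarrow> transpose A = A"

definition S_graph :: "('n::finite \<Rightarrow> 'n \<Rightarrow> bool) \<Rightarrow> (real^'n^'n) set" where
  "S_graph E = {A. symmetric_mat A \<and> (\<forall>i j. i \<noteq> j \<longrightarrow> (A $ i $ j \<noteq> 0 \<longleftrightarrow> E i j))}"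

definition SSP :: "real^'n^'n \<Rightarrow> bool" where
  "SSP A \<longleftrightarrow> (\<forall>X::real^'n^'n. symmetric_mat X
      \<and> (\<forall>i j. A $ i $ j * X $ i $ j = 0)
      \<and> (\<forall>i. X $ i $ i = 0)
      \<and> A ** X - X ** A = 0 \<longrightarrow> X = 0)"

definition in_G_SSP :: "('n::finite \<Rightarrow> 'n \<Rightarrow> bool) \<Rightarrow> bool" where
  "in_G_SSP E \<longleftrightarrow> (\<forall>A \<in> S_graph E. SSP A)"

end

theory Submission
  imports Defs "HOL-Library.Transitive_Closure_Table"
begin

(* Let S consist of the hub of degree at least 4, or of the two hubs of degree at least 3, and
   choose branches B1, B2 of T - S at one hub and B3, B4 at the other (four branches if there is
   a single hub), none containing the other hub. Since T is acyclic, a hub has exactly one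
   neighbour in each branch at it and none in the branches at the other hub. Hence for
   A = adjacency - diag(number of neighbours outside S) the signed indicators
   x = 1_B1 - 1_B2 and y = 1_B3 - 1_B4 are null vectors. No edge joins B1 or B2 to B3 or B4, so
   X = x y^T + y x^T vanishes on the diagonal and on the support of A, and AX = 0 = XA:
   A has no SSP. *)

lemma not_SSP_if_separated_eigenvectors:
  fixes A :: "real^'n^'n" and x y :: "real^'n"
  assumes symA: "symmetric_mat A"
    and Ax: "A *v x = c *\<^sub>R x" and Ay: "A *v y = c *\<^sub>R y"
    and disj: "\<And>i. x $ i * y $ i = 0"
    and sep: "\<And>i j. A $ i $ j \<noteq> 0 \<Longrightarrow> x $ i * y $ j = 0"
    and "x \<noteq> 0" and "y \<noteq> 0"
  shows "\<not> SSP A"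
proof
  assume "SSP A"
  define X :: "real^'n^'n" where "X = (\<chi> i j. x $ i * y $ j + y $ i * x $ j)"
  have A_sym: "A $ j $ i = A $ i $ j" for i j
  proof -
    have "transpose A $ i $ j = A $ i $ j"
      using symA by (simp add: symmetric_mat_def)
    then show ?thesis by (simp add: transpose_def)
  qed
  have "symmetric_mat X"
    by (simp add: symmetric_mat_def transpose_def X_def vec_eq_iff)
  moreover have "A $ i $ j * X $ i $ j = 0" for i j
  proof (cases "A $ i $ j = 0")
    case False
    then have "x $ i * y $ j = 0" and "x $ j * y $ i = 0"
      using sep A_sym by metis+
    then show ?thesis by (auto simp: X_def mult.commute)
  qed simp
  moreover have "X $ i $ i = 0" for i
    using disj[of i] by (simp add: X_def mult.commute)
  moreover have "A ** X = c *\<^sub>R X"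
  proof -
    have "(A ** X) $ i $ j = (A *v x) $ i * y $ j + (A *v y) $ i * x $ j" for i j
      by (simp add: matrix_matrix_mult_def matrix_vector_mult_def X_def
          algebra_simps sum.distrib sum_distrib_left)
    then show ?thesis
      using Ax Ay by (simp add: vec_eq_iff X_def algebra_simps)
  qed
  moreover have "X ** A = c *\<^sub>R X"
  proof -
    have "(X ** A) $ i $ j = x $ i * (A *v y) $ j + y $ i * (A *v x) $ j" for i j
      by (simp add: matrix_matrix_mult_def matrix_vector_mult_def X_def A_sym[of _ j]
          algebra_simps sum.distrib sum_distrib_left)
    then show ?thesis
      using Ax Ay by (simp add: vec_eq_iff X_def algebra_simps)
  qed
  ultimately have "X = 0"
    using \<open>SSP A\<close> unfolding SSP_def by simp
  obtain i j where "x $ i \<noteq> 0" "y $ j \<noteq> 0"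
    using \<open>x \<noteq> 0\<close> \<open>y \<noteq> 0\<close> by (metis vec_eq_iff zero_index)
  moreover have "y $ i = 0"
    using disj[of i] \<open>x $ i \<noteq> 0\<close> by simp
  ultimately have "X $ i $ j \<noteq> 0"
    by (simp add: X_def)
  with \<open>X = 0\<close> show False by simp
qed

lemma simple_graph_symp: "simple_graph E \<Longrightarrow> symp E"
  by (simp add: simple_graph_def symp_def)

lemma simple_graph_neq: "simple_graph E \<Longrightarrow> E s a \<Longrightarrow> a \<noteq> s"
  by (auto simp: simple_graph_def)

definition union_of_components :: "('a \<Rightarrow> 'a \<Rightarrow> bool) \<Rightarrow> 'a set \<Rightarrow> 'a set \<Rightarrow> bool" where
  "union_of_components E S C \<longleftrightarrow> C \<inter> S = {} \<and> (\<forall>w\<in>C. \<forall>z. E w z \<longrightarrow> z \<in> C \<union> S)"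

definition signed_indicator :: "'n::finite set \<Rightarrow> 'n set \<Rightarrow> real^'n" where
  "signed_indicator C D = (\<chi> k. of_bool (k \<in> C) - of_bool (k \<in> D))"

definition adjacency_minus_degree :: "('n::finite \<Rightarrow> 'n \<Rightarrow> bool) \<Rightarrow> 'n set \<Rightarrow> real^'n^'n" where
  "adjacency_minus_degree E S =
     (\<chi> i j. of_bool (E i j) - of_bool (i = j) * real (card ({z. E i z} - S)))"

lemma adjacency_minus_degree_in_S_graph:
  "simple_graph E \<Longrightarrow> adjacency_minus_degree E S \<in> S_graph E"
  by (auto simp: S_graph_def symmetric_mat_def simple_graph_def adjacency_minus_degree_def
      transpose_def vec_eq_iff)

lemma adjacency_minus_degree_mult:
  "(adjacency_minus_degree E S *v f) $ i
     = (\<Sum>j\<in>{z. E i z}. f $ j) - real (card ({z. E i z} - S)) * f $ i"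
  by (simp add: adjacency_minus_degree_def matrix_vector_mult_def left_diff_distrib
      sum_subtractf mult.assoc)

lemma sum_signed_indicator:
  "(\<Sum>j\<in>N. signed_indicator C D $ j) = real (card (N \<inter> C)) - real (card (N \<inter> D))"
  by (simp add: signed_indicator_def sum_subtractf Int_def)

lemma neighbours_in_union_of_components:
  "union_of_components E S C \<Longrightarrow> w \<in> C \<Longrightarrow> {z. E w z} \<inter> C = {z. E w z} - S"
  unfolding union_of_components_def by blast

lemma neighbours_outside_union_of_components:
  assumes "symp E" and "union_of_components E S C" and "w \<notin> C \<union> S"
  shows "{z. E w z} \<inter> C = {}"
  using assms unfolding union_of_components_def by (blast dest: sympD)

lemma adjacency_minus_degree_signed_indicator_eq_0:
  assumes "symp E"
    and C: "union_of_components E S C" and D: "union_of_components E S D"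
    and "C \<inter> D = {}"
    and balanced: "\<And>s. s \<in> S \<Longrightarrow> card ({z. E s z} \<inter> C) = card ({z. E s z} \<inter> D)"
  shows "adjacency_minus_degree E S *v signed_indicator C D = 0"
proof -
  have "(adjacency_minus_degree E S *v signed_indicator C D) $ i = 0" for i
  proof -
    have entry: "(adjacency_minus_degree E S *v signed_indicator C D) $ i
      = real (card ({z. E i z} \<inter> C)) - real (card ({z. E i z} \<inter> D))
        - real (card ({z. E i z} - S)) * (of_bool (i \<in> C) - of_bool (i \<in> D))"
      by (simp only: adjacency_minus_degree_mult sum_signed_indicator)
        (simp add: signed_indicator_def)
    consider "i \<in> S" | "i \<in> C" | "i \<in> D" | "i \<notin> S" "i \<notin> C" "i \<notin> D"
      by blast
    then show ?thesis
    proof cases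
      case 1
      then have "i \<notin> C" "i \<notin> D"
        using C D by (auto simp: union_of_components_def)
      with 1 show ?thesis
        using balanced by (simp add: entry)
    next
      case 2
      have "{z. E i z} \<inter> C = {z. E i z} - S"
        using C 2 by (rule neighbours_in_union_of_components)
      moreover have "{z. E i z} \<inter> D = {}"
        using calculation D \<open>C \<inter> D = {}\<close> by (auto simp: union_of_components_def)
      ultimately show ?thesis
        using 2 \<open>C \<inter> D = {}\<close> by (auto simp: entry)
    next
      case 3
      have "{z. E i z} \<inter> D = {z. E i z} - S"
        using D 3 by (rule neighbours_in_union_of_components)
      moreover have "{z. E i z} \<inter> C = {}"
        using calculation C \<open>C \<inter> D = {}\<close> by (auto simp: union_of_components_def)
      ultimately show ?thesis
        using 3 \<open>C \<inter> D = {}\<close> by (auto simp: entry)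
    next
      case 4
      then have "{z. E i z} \<inter> C = {}" and "{z. E i z} \<inter> D = {}"
        using neighbours_outside_union_of_components[OF \<open>symp E\<close>] C D by blast+
      with 4 show ?thesis
        by (simp add: entry)
    qed
  qed
  then show ?thesis by (simp add: vec_eq_iff)
qed

lemma not_in_G_SSP_if_balanced_components:
  assumes "simple_graph E"
    and comps: "union_of_components E S C1" "union_of_components E S C2"
      "union_of_components E S C3" "union_of_components E S C4"
    and disj: "C1 \<inter> C2 = {}" "C3 \<inter> C4 = {}" "(C1 \<union> C2) \<inter> (C3 \<union> C4) = {}"
    and "C1 \<noteq> {}" "C3 \<noteq> {}"
    and balanced:
      "\<And>s. s \<in> S \<Longrightarrow> card ({z. E s z} \<inter> C1) = card ({z. E s z} \<inter> C2)"
      "\<And>s. s \<in> S \<Longrightarrow> card ({z. E s z} \<inter> C3) = card ({z. E s z} \<inter> C4)"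
  shows "\<not> in_G_SSP E"
proof -
  let ?A = "adjacency_minus_degree E S"
  let ?x = "signed_indicator C1 C2" and ?y = "signed_indicator C3 C4"
  have sym: "symp E"
    using \<open>simple_graph E\<close> by (rule simple_graph_symp)
  have A: "?A \<in> S_graph E"
    using \<open>simple_graph E\<close> by (rule adjacency_minus_degree_in_S_graph)
  have "\<not> SSP ?A"
  proof (rule not_SSP_if_separated_eigenvectors)
    show "symmetric_mat ?A"
      using A by (simp add: S_graph_def)
    show "?A *v ?x = 0 *\<^sub>R ?x" "?A *v ?y = 0 *\<^sub>R ?y"
      using adjacency_minus_degree_signed_indicator_eq_0[OF sym comps(1,2) disj(1) balanced(1)]
        adjacency_minus_degree_signed_indicator_eq_0[OF sym comps(3,4) disj(2) balanced(2)]
      by simp_all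
    show "?x $ i * ?y $ i = 0" for i
      using disj(3) by (auto simp: signed_indicator_def)
    show "?x $ i * ?y $ j = 0" if "?A $ i $ j \<noteq> 0" for i j
    proof (cases "i \<in> C1 \<union> C2")
      case True
      have "E i j \<or> i = j"
        using that by (auto simp: adjacency_minus_degree_def)
      then have "j \<in> C1 \<union> C2 \<union> S"
        using True comps(1,2) by (auto simp: union_of_components_def)
      then have "j \<notin> C3 \<union> C4"
        using disj(3) comps(3,4) by (auto simp: union_of_components_def)
      then show ?thesis by (simp add: signed_indicator_def)
    qed (simp add: signed_indicator_def)
    show "?x \<noteq> 0" "?y \<noteq> 0"
      using \<open>C1 \<noteq> {}\<close> \<open>C3 \<noteq> {}\<close> disj(1,2) by (auto simp: signed_indicator_def vec_eq_iff)
  qed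
  with A show ?thesis
    unfolding in_G_SSP_def by blast
qed

definition delete_vertex :: "('a \<Rightarrow> 'a \<Rightarrow> bool) \<Rightarrow> 'a \<Rightarrow> 'a \<Rightarrow> 'a \<Rightarrow> bool" where
  "delete_vertex E s p q \<longleftrightarrow> E p q \<and> p \<noteq> s \<and> q \<noteq> s"

definition branch :: "('a \<Rightarrow> 'a \<Rightarrow> bool) \<Rightarrow> 'a \<Rightarrow> 'a \<Rightarrow> 'a set" where
  "branch E s a = {w. (delete_vertex E s)\<^sup>*\<^sup>* a w}"

lemma in_branch_self [simp]: "a \<in> branch E s a"
  by (simp add: branch_def)

lemma branch_avoids_vertex: "a \<noteq> s \<Longrightarrow> s \<notin> branch E s a"
  by (auto simp: branch_def delete_vertex_def elim: rtranclp.cases)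

lemma hub_not_in_branch: "simple_graph E \<Longrightarrow> E s a \<Longrightarrow> s \<notin> branch E s a"
  by (rule branch_avoids_vertex) (rule simple_graph_neq)

lemma branch_step:
  assumes "w \<in> branch E s a" "E w z" "a \<noteq> s" "z \<noteq> s"
  shows "z \<in> branch E s a"
proof -
  have "w \<noteq> s"
    using assms(1,3) branch_avoids_vertex by fastforce
  with assms show ?thesis
    by (auto simp: branch_def delete_vertex_def intro: rtranclp.rtrancl_into_rtrancl)
qed

lemma branch_eq:
  assumes "symp E" "w \<in> branch E s a"
  shows "branch E s w = branch E s a"
proof -
  have "symp (delete_vertex E s)"
    using \<open>symp E\<close> by (auto simp: symp_def delete_vertex_def)
  then have "symp (delete_vertex E s)\<^sup>*\<^sup>*"
    by (rule symp_rtranclp)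
  with assms(2) show ?thesis
    by (auto simp: branch_def dest: sympD intro: rtranclp_trans)
qed

lemma branch_subset_branch:
  assumes "u \<notin> branch E v c"
  shows "branch E v c \<subseteq> branch E u c"
proof
  fix w
  assume "w \<in> branch E v c"
  then have "(delete_vertex E v)\<^sup>*\<^sup>* c w"
    by (simp add: branch_def)
  then show "w \<in> branch E u c"
  proof (induction rule: rtranclp_induct)
    case (step y z)
    then have "y \<in> branch E v c" "z \<in> branch E v c"
      by (auto simp: branch_def intro: rtranclp.rtrancl_into_rtrancl)
    with assms have "y \<noteq> u" "z \<noteq> u"
      by auto
    with step show ?case
      by (auto simp: branch_def delete_vertex_def intro: rtranclp.rtrancl_into_rtrancl)
  qed simp
qed

lemma union_of_components_branch:
  assumes "a \<noteq> s" "t \<notin> branch E s a"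
  shows "union_of_components E {s, t} (branch E s a)"
  using assms branch_avoids_vertex branch_step unfolding union_of_components_def by fastforce

lemma tree_neighbour_not_in_branch:
  assumes "is_tree E" "E s a" "E s b" "a \<noteq> b"
  shows "b \<notin> branch E s a"
proof
  assume "b \<in> branch E s a"
  then obtain ys where path: "rtrancl_path (delete_vertex E s) a ys b" and "distinct (a # ys)"
    by (auto simp: branch_def rtranclp_eq_rtrancl_path elim: rtrancl_path_distinct)
  have "simple_graph E" and "acyclic_graph E"
    using \<open>is_tree E\<close> by (simp_all add: is_tree_def)
  have "ys \<noteq> []"
    using path \<open>a \<noteq> b\<close> by (auto elim: rtrancl_path.cases)
  have "s \<notin> set ys"
    using rtrancl_path_Range[OF path] by (auto simp: delete_vertex_def Rangep.simps)
  have "is_cycle E (s # a # ys)"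
    unfolding is_cycle_def
  proof (intro conjI allI impI)
    show "3 \<le> length (s # a # ys)"
      using \<open>ys \<noteq> []\<close> by (cases ys) auto
    show "distinct (s # a # ys)"
      using \<open>distinct (a # ys)\<close> \<open>s \<notin> set ys\<close> simple_graph_neq[OF \<open>simple_graph E\<close> \<open>E s a\<close>]
      by auto
    show "E (last (s # a # ys)) (hd (s # a # ys))"
      using rtrancl_path_last[OF path \<open>ys \<noteq> []\<close>] \<open>ys \<noteq> []\<close> \<open>E s b\<close> \<open>simple_graph E\<close>
      by (auto simp: simple_graph_def)
  next
    fix i
    assume "Suc i < length (s # a # ys)"
    then show "E ((s # a # ys) ! i) ((s # a # ys) ! Suc i)"
      using \<open>E s a\<close> rtrancl_path_nth[OF path]
      by (cases i) (auto simp: delete_vertex_def)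
  qed
  with \<open>acyclic_graph E\<close> show False
    by (auto simp: acyclic_graph_def)
qed

lemma card_neighbours_in_branch:
  assumes "is_tree E" "E u a" "v \<notin> branch E u a" "s \<in> {u, v}"
  shows "card ({z. E s z} \<inter> branch E u a) = of_bool (s = u)"
proof (cases "s = u")
  case True
  then have "{z. E s z} \<inter> branch E u a = {a}"
    using assms(1,2) tree_neighbour_not_in_branch by fastforce
  with True show ?thesis
    by simp
next
  case False
  have "simple_graph E"
    using \<open>is_tree E\<close> by (simp add: is_tree_def)
  have "a \<noteq> u"
    using simple_graph_neq[OF \<open>simple_graph E\<close> \<open>E u a\<close>] .
  have "{z. E v z} \<inter> branch E u a = {}"
  proof (rule ccontr)
    assume "{z. E v z} \<inter> branch E u a \<noteq> {}"
    then obtain z where "E z v" "z \<in> branch E u a"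
      using \<open>simple_graph E\<close> by (auto simp: simple_graph_def)
    then have "v \<in> branch E u a"
      using branch_step \<open>a \<noteq> u\<close> False assms(4) by fastforce
    with assms(3) show False ..
  qed
  with False assms(4) show ?thesis
    by auto
qed

lemma branches_disjoint:
  assumes "is_tree E" "E u a" "E v c" "v \<notin> branch E u a" "u \<notin> branch E v c"
    and "(u, a) \<noteq> (v, c)"
  shows "branch E u a \<inter> branch E v c = {}"
proof (rule ccontr)
  assume "branch E u a \<inter> branch E v c \<noteq> {}"
  then obtain w where w: "w \<in> branch E u a" "w \<in> branch E v c"
    by auto
  have "simple_graph E"
    using \<open>is_tree E\<close> by (simp add: is_tree_def)
  then have "symp E"
    by (rule simple_graph_symp)
  have "w \<in> branch E u c"
    using w(2) branch_subset_branch[OF assms(5)] by blast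
  then have "c \<in> branch E u a"
    using branch_eq[OF \<open>symp E\<close>] w(1) by (metis in_branch_self)
  show False
  proof (cases "u = v")
    case True
    then show ?thesis
      using tree_neighbour_not_in_branch assms \<open>c \<in> branch E u a\<close> by blast
  next
    case False
    have "a \<noteq> u"
      using simple_graph_neq[OF \<open>simple_graph E\<close> \<open>E u a\<close>] .
    then have "v \<in> branch E u a"
      using branch_step[OF \<open>c \<in> branch E u a\<close> \<open>E v c\<close> [THEN sympD[OF \<open>symp E\<close>]]] False
      by blast
    with assms(4) show ?thesis ..
  qed
qed

lemma tree_two_branches_avoiding:
  assumes "is_tree E" "degree E u \<ge> 3"
  obtains a b where "E u a" "E u b" "a \<noteq> b" "v \<notin> branch E u a" "v \<notin> branch E u b"
proof -
  have "symp E"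
    using \<open>is_tree E\<close> by (simp add: is_tree_def simple_graph_symp)
  define B where "B = {z. E u z \<and> v \<in> branch E u z}"
  have "card B \<le> Suc 0"
    unfolding card_le_Suc0_iff_eq[OF finite]
  proof (intro ballI)
    fix z1 z2
    assume "z1 \<in> B" "z2 \<in> B"
    then have "branch E u z1 = branch E u v" "branch E u z2 = branch E u v"
      using branch_eq[OF \<open>symp E\<close>, of v u z1] branch_eq[OF \<open>symp E\<close>, of v u z2]
      by (simp_all add: B_def)
    then have "z2 \<in> branch E u z1"
      by (metis in_branch_self)
    then show "z1 = z2"
      using tree_neighbour_not_in_branch \<open>is_tree E\<close> \<open>z1 \<in> B\<close> \<open>z2 \<in> B\<close>
      unfolding B_def by blast
  qed
  moreover have "card {z. E u z} - card B \<le> card ({z. E u z} - B)"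
    by (rule diff_card_le_card_Diff) simp
  ultimately have "2 \<le> card ({z. E u z} - B)"
    using \<open>degree E u \<ge> 3\<close> unfolding degree_def by linarith
  then obtain a b where "a \<noteq> b" "{a, b} \<subseteq> {z. E u z} - B"
    by (auto simp: numeral_eq_Suc card_le_Suc_iff)
  then show ?thesis
    using that unfolding B_def by auto
qed

lemma tree_not_in_G_SSP_if_two_pairs_of_branches:
  assumes tree: "is_tree E"
    and a: "E u a" "v \<notin> branch E u a" and b: "E u b" "v \<notin> branch E u b" and "a \<noteq> b"
    and c: "E v c" "u \<notin> branch E v c" and d: "E v d" "u \<notin> branch E v d" and "c \<noteq> d"
    and distinct_pairs: "u \<noteq> v \<or> distinct [a, b, c, d]"
  shows "\<not> in_G_SSP E"
proof (rule not_in_G_SSP_if_balanced_components)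
  show sg: "simple_graph E"
    using tree by (simp add: is_tree_def)
  have neq: "a \<noteq> u" "b \<noteq> u" "c \<noteq> v" "d \<noteq> v"
    using simple_graph_neq[OF sg] a(1) b(1) c(1) d(1) by simp_all
  show "union_of_components E {u, v} (branch E u a)" "union_of_components E {u, v} (branch E u b)"
    using union_of_components_branch[OF neq(1) a(2)] union_of_components_branch[OF neq(2) b(2)] .
  show "union_of_components E {u, v} (branch E v c)" "union_of_components E {u, v} (branch E v d)"
    using union_of_components_branch[OF neq(3) c(2)] union_of_components_branch[OF neq(4) d(2)]
    by (simp_all add: insert_commute)
  have hubs: "u \<notin> branch E u a" "u \<notin> branch E u b" "v \<notin> branch E v c" "v \<notin> branch E v d"
    using hub_not_in_branch[OF sg] a(1) b(1) c(1) d(1) by simp_all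
  show "branch E u a \<inter> branch E u b = {}" "branch E v c \<inter> branch E v d = {}"
    using branches_disjoint[OF tree a(1) b(1) hubs(1,2)] branches_disjoint[OF tree c(1) d(1) hubs(3,4)]
      \<open>a \<noteq> b\<close> \<open>c \<noteq> d\<close>
    by auto
  have "(u, x) \<noteq> (v, y)" if "x \<in> {a, b}" "y \<in> {c, d}" for x y
    using distinct_pairs that by auto
  then show "(branch E u a \<union> branch E u b) \<inter> (branch E v c \<union> branch E v d) = {}"
    using branches_disjoint[OF tree a(1) c(1) a(2) c(2)] branches_disjoint[OF tree a(1) d(1) a(2) d(2)]
      branches_disjoint[OF tree b(1) c(1) b(2) c(2)] branches_disjoint[OF tree b(1) d(1) b(2) d(2)]
    by blast
  show "branch E u a \<noteq> {}" "branch E v c \<noteq> {}"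
    by (metis empty_iff in_branch_self)+
  show "card ({z. E s z} \<inter> branch E u a) = card ({z. E s z} \<inter> branch E u b)"
    if "s \<in> {u, v}" for s
    using card_neighbours_in_branch[OF tree a that] card_neighbours_in_branch[OF tree b that] by simp
  show "card ({z. E s z} \<inter> branch E v c) = card ({z. E s z} \<inter> branch E v d)"
    if "s \<in> {u, v}" for s
    using card_neighbours_in_branch[OF tree c] card_neighbours_in_branch[OF tree d] that
    by (simp add: insert_commute)
qed

lemma obtain_four_distinct:
  assumes "finite A" "4 \<le> card A"
  obtains a b c d where "distinct [a, b, c, d]" "{a, b, c, d} \<subseteq> A"
  using assms by (auto simp: numeral_eq_Suc card_le_Suc_iff)

theorem corollary2p8:
  fixes E :: "'n::finite \<Rightarrow> 'n \<Rightarrow> bool"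
  assumes "is_tree E"
    and "(\<exists>v. degree E v \<ge> 4) \<or> (\<exists>u v. u \<noteq> v \<and> degree E u \<ge> 3 \<and> degree E v \<ge> 3)"
  shows "\<not> in_G_SSP E"
  using assms(2)
proof
  assume "\<exists>v. degree E v \<ge> 4"
  then obtain v a b c d where "distinct [a, b, c, d]" "{a, b, c, d} \<subseteq> {z. E v z}"
    unfolding degree_def by (metis obtain_four_distinct finite)
  moreover have "simple_graph E"
    using \<open>is_tree E\<close> by (simp add: is_tree_def)
  ultimately show ?thesis
    using hub_not_in_branch tree_not_in_G_SSP_if_two_pairs_of_branches[OF \<open>is_tree E\<close>,
        where u = v and v = v and a = a and b = b and c = c and d = d]
    by auto
next
  assume "\<exists>u v. u \<noteq> v \<and> degree E u \<ge> 3 \<and> degree E v \<ge> 3"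
  then obtain u v where "u \<noteq> v" "degree E u \<ge> 3" "degree E v \<ge> 3"
    by blast
  obtain a b where "E u a" "E u b" "a \<noteq> b" "v \<notin> branch E u a" "v \<notin> branch E u b"
    using tree_two_branches_avoiding[OF \<open>is_tree E\<close> \<open>degree E u \<ge> 3\<close>] .
  moreover obtain c d where "E v c" "E v d" "c \<noteq> d" "u \<notin> branch E v c" "u \<notin> branch E v d"
    using tree_two_branches_avoiding[OF \<open>is_tree E\<close> \<open>degree E v \<ge> 3\<close>] .
  ultimately show ?thesis
    using \<open>u \<noteq> v\<close> \<open>is_tree E\<close> tree_not_in_G_SSP_if_two_pairs_of_branches by blast
qed

end
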